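(* Under the Rician noise model below with $\sigma>0$ known, the Fisher information matrix with respect to the parameter $D\in\mathbb R^6$ at $D^0$, based on the data $\{S_b:b\in\mathcal B\}$, is $$\mathcal I(D^0;\sigma)=\sum_{b\in\mathcal B}\mathfrak I(\overline S_b;\sigma)\,\overline S_b^2\,x_bx_b^T,$$ where $\mathfrak I(\zeta;\sigma)$, the Fisher information for the parameter $\zeta$ of the Rician density $p_{\zeta,\sigma}$, equals $$\mathfrak I(\zeta;\sigma)=\frac1{\sigma^2}\Big[e^{-\zeta^2/(2\sigma^2)}V\Big(\frac{\zeta}{\sigma}\Big)-\frac{\zeta^2}{\sigma^2}\Big],\qquad V(w)=\int_0^\infty u^3\frac{(I_1(uw))^2}{I_0(uw)}e^{-u^2/2}\,du=\frac1{w^4}\int_0^\infty v^3\frac{(I_1(v))^2}{I_0(v)}e^{-v^2/(2w^2)}\,dv\quad(w>0).$$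
   Context: $I_0,I_1$ are the modified Bessel functions of the first kind of orders $0$ and $1$. The Rician density with signal parameter $\zeta\ge0$ and noise parameter $\sigma>0$ is $p_{\zeta,\sigma}(x)=\frac{x}{\sigma^2}\exp\!\big(-\frac{x^2+\zeta^2}{2\sigma^2}\big)I_0\!\big(\frac{x\zeta}{\sigma^2}\big)\mathbf 1(x>0)$. Model: $S_0>0$ known; $\mathcal B$ a finite set of unit vectors $b=(b_1,b_2,b_3)^T\in\mathbb R^3$; $D\in\mathbb R^6$ identified with a symmetric $3\times3$ matrix via $(D_{11},D_{22},D_{33},D_{12},D_{13},D_{23})$; $x_b=(b_1^2,b_2^2,b_3^2,2b_1b_2,2b_1b_3,2b_2b_3)^T$; $\zeta(D,b)=S_0\exp(-x_b^TD)$; the observations $S_b$, $b\in\mathcal B$, are independent with $S_b$ having density $p_{\zeta(D,b),\sigma}$ (equivalently $S_b=\|\zeta(D,b)u_b+\sigma\varepsilon_b\|$ with $u_b\in\mathbb R^2$ unit and $\varepsilon_b\sim N(0,I_2)$ independent); $D^0$ is the true parameter and $\overline S_b=\zeta(D^0,b)$. *)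

theory Defs
  imports "HOL-Analysis.Analysis"
begin

definition besselI :: "nat \<Rightarrow> real \<Rightarrow> real" where
  "besselI nu x = (\<Sum>k. (x / 2) ^ (2 * k + nu) / (fact k * fact (k + nu)))"

definition rice_pdf :: "real \<Rightarrow> real \<Rightarrow> real \<Rightarrow> real" where
  "rice_pdf zt sg x =
     (if x > 0 then x / sg\<^sup>2 * exp (- (x\<^sup>2 + zt\<^sup>2) / (2 * sg\<^sup>2))
                    * besselI 0 (x * zt / sg\<^sup>2) else 0)"

definition rice_fisher :: "real \<Rightarrow> real \<Rightarrow> real" where
  "rice_fisher zt sg =
     (\<integral>x. (deriv (\<lambda>z. ln (rice_pdf z sg x)) zt)\<^sup>2 * rice_pdf zt sg x \<partial>lborel)"

text \<open>Design vector x_b = (b1^2, b2^2, b3^2, 2 b1 b2, 2 b1 b3, 2 b2 b3); D coordinates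
  (D11, D22, D33, D12, D13, D23) in the same order.\<close>
definition xvec :: "real ^ 3 \<Rightarrow> real ^ 6" where
  "xvec b = vector [(b$1)\<^sup>2, (b$2)\<^sup>2, (b$3)\<^sup>2, 2 * b$1 * b$2, 2 * b$1 * b$3, 2 * b$2 * b$3]"

definition zeta :: "real \<Rightarrow> real ^ 6 \<Rightarrow> real ^ 3 \<Rightarrow> real" where
  "zeta S0 D b = S0 * exp (- (xvec b \<bullet> D))"

definition joint_pdf :: "real \<Rightarrow> real \<Rightarrow> (real ^ 3) set \<Rightarrow> real ^ 6 \<Rightarrow> (real ^ 3 \<Rightarrow> real) \<Rightarrow> real" where
  "joint_pdf S0 sg B D s = (\<Prod>b\<in>B. rice_pdf (zeta S0 D b) sg (s b))"

definition score :: "real \<Rightarrow> real \<Rightarrow> (real ^ 3) set \<Rightarrow> real ^ 6 \<Rightarrow> 6 \<Rightarrow> (real ^ 3 \<Rightarrow> real) \<Rightarrow> real" where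
  "score S0 sg B D i s = deriv (\<lambda>t. ln (joint_pdf S0 sg B (D + t *\<^sub>R axis i 1) s)) 0"

definition fisher_matrix :: "real \<Rightarrow> real \<Rightarrow> (real ^ 3) set \<Rightarrow> real ^ 6 \<Rightarrow> real ^ 6 ^ 6" where
  "fisher_matrix S0 sg B D = (\<chi> i j.
     \<integral>s. score S0 sg B D i s * score S0 sg B D j s * joint_pdf S0 sg B D s
       \<partial>(PiM B (\<lambda>_. lborel)))"

definition outer :: "real ^ 6 \<Rightarrow> real ^ 6 ^ 6" where
  "outer v = (\<chi> i j. v $ i * v $ j)"

definition Vfun :: "real \<Rightarrow> real" where
  "Vfun w = (LBINT u:{0<..}. u ^ 3 * (besselI 1 (u * w))\<^sup>2 / besselI 0 (u * w) * exp (- u\<^sup>2 / 2))"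

end

theory Submission
  imports Defs "HOL-Probability.Probability"
begin

text \<open>
  The proof has two halves.  The scalar half studies the Rice family \<open>p\<^sub>\<zeta>\<^sub>,\<^sub>\<sigma>\<close>: its score is
  \<open>(R(x) - \<zeta>)/\<sigma>\<^sup>2\<close> with \<open>R(x) = x I\<^sub>1(x\<zeta>/\<sigma>\<^sup>2)/I\<^sub>0(x\<zeta>/\<sigma>\<^sup>2)\<close>, so the Fisher information is
  \<open>(E[R\<^sup>2] - 2\<zeta> E[R] + \<zeta>\<^sup>2)/\<sigma>\<^sup>4\<close>.  Expanding \<open>I\<^sub>\<nu>\<close> in its power series and integrating termwise
  against the half-line Gaussian weight (monotone convergence) turns \<open>E[1]\<close> and \<open>E[R]\<close> into
  exponential series, giving \<open>E[1] = 1\<close> and \<open>E[R] = \<zeta>\<close>; \<open>E[R\<^sup>2]\<close> is finite because \<open>0 \<le> I\<^sub>1 \<le> I\<^sub>0\<close>,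
  and the substitution \<open>x = \<sigma>u\<close> identifies it with \<open>\<sigma>\<^sup>2 e\<^sup>-\<^sup>\<zeta>\<^sup>2\<^sup>/\<^sup>(\<^sup>2\<^sup>\<sigma>\<^sup>2\<^sup>) V(\<zeta>/\<sigma>)\<close>.

  The multivariate half uses independence: the score of the joint density in direction
  \<open>D\<^sub>i\<close> is \<open>\<Sum>\<^sub>b score\<^sub>b \<partial>\<^sub>i\<zeta>(D,b)\<close> with \<open>\<partial>\<^sub>i\<zeta>(D,b) = -x\<^sub>b\<^sub>,\<^sub>i \<zeta>(D,b)\<close>, so each entry of the
  Fisher matrix is a sum of integrals of products of one-dimensional factors.  By Fubini these
  factor; the centred scores kill all off-diagonal terms \<open>b \<noteq> c\<close>, leaving
  \<open>\<Sum>\<^sub>b I(\<zeta>\<^sub>b) \<zeta>\<^sub>b\<^sup>2 x\<^sub>b x\<^sub>b\<^sup>T\<close>.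
\<close>

definition bessel_coeff :: "nat \<Rightarrow> nat \<Rightarrow> real" where
  "bessel_coeff nu k = 1 / (fact k * fact (k + nu))"

definition bessel_series :: "nat \<Rightarrow> real \<Rightarrow> real" where
  "bessel_series nu y = (\<Sum>k. bessel_coeff nu k * y ^ k)"

text \<open>The series converges everywhere, dominated by the exponential series.\<close>
lemma bessel_series_summable: "summable (\<lambda>k. bessel_coeff nu k * y ^ k)"
proof (rule summable_comparison_test[OF _ summable_exp[of "\<bar>y\<bar>"]])
  show "\<exists>N. \<forall>k\<ge>N. norm (bessel_coeff nu k * y ^ k) \<le> inverse (fact k) * \<bar>y\<bar> ^ k"
  proof (intro exI allI impI)
    fix k :: nat
    have "bessel_coeff nu k \<le> inverse (fact k)" "0 \<le> bessel_coeff nu k"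
      unfolding bessel_coeff_def by (simp_all add: divide_simps)
    then show "norm (bessel_coeff nu k * y ^ k) \<le> inverse (fact k) * \<bar>y\<bar> ^ k"
      by (simp add: abs_mult power_abs mult_right_mono)
  qed
qed

lemma besselI_eq_series: "besselI nu x = (x / 2) ^ nu * bessel_series nu ((x / 2)\<^sup>2)"
proof -
  have "(x / 2) ^ (2 * k + nu) / (fact k * fact (k + nu))
          = (x / 2) ^ nu * (bessel_coeff nu k * ((x / 2)\<^sup>2) ^ k)" for k
    by (simp add: bessel_coeff_def power_add power_mult)
  then have "besselI nu x = (\<Sum>k. (x / 2) ^ nu * (bessel_coeff nu k * ((x / 2)\<^sup>2) ^ k))"
    unfolding besselI_def by simp
  also have "\<dots> = (x / 2) ^ nu * bessel_series nu ((x / 2)\<^sup>2)"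
    unfolding bessel_series_def by (rule suminf_mult[OF bessel_series_summable])
  finally show ?thesis .
qed

lemma bessel_series_nonneg: "y \<ge> 0 \<Longrightarrow> bessel_series nu y \<ge> 0"
  unfolding bessel_series_def
  by (intro suminf_nonneg bessel_series_summable) (auto simp: bessel_coeff_def)

lemma bessel_series_deriv:
  "(bessel_series 0 has_real_derivative bessel_series 1 y) (at y)"
proof -
  have "diffs (bessel_coeff 0) = bessel_coeff 1"
    by (auto simp: diffs_def bessel_coeff_def fun_eq_iff field_simps simp del: fact_Suc)
       (simp add: algebra_simps)
  then show ?thesis
    using termdiffs_strong_converges_everywhere[OF bessel_series_summable, of 0 y]
    unfolding bessel_series_def by simp
qed

lemma besselI_cont: "isCont (besselI nu) x"
proof -
  have "isCont (bessel_series nu) y" for y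
    unfolding bessel_series_def
    using termdiffs_strong_converges_everywhere[OF bessel_series_summable]
    by (blast intro: DERIV_isCont)
  then show ?thesis
    unfolding besselI_eq_series[abs_def]
    by (intro continuous_intros isCont_o2[where f = "\<lambda>x. (x / 2)\<^sup>2"]) simp_all
qed

lemma besselI_measurable[measurable]: "besselI nu \<in> borel_measurable borel"
  by (intro borel_measurable_continuous_onI continuous_at_imp_continuous_on ballI besselI_cont)

lemma besselI0_deriv: "(besselI 0 has_real_derivative besselI 1 x) (at x)"
proof -
  have "((\<lambda>x::real. (x / 2)\<^sup>2) has_real_derivative x / 2) (at x)"
    by (auto intro!: derivative_eq_intros)
  from DERIV_chain2[OF bessel_series_deriv this]
  show ?thesis by (simp add: besselI_eq_series[abs_def] besselI_eq_series[of 1] mult.commute)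
qed

lemma besselI0_ge1: "besselI 0 x \<ge> 1"
proof -
  have "(\<Sum>k<1. bessel_coeff 0 k * ((x / 2)\<^sup>2) ^ k) \<le> bessel_series 0 ((x / 2)\<^sup>2)"
    unfolding bessel_series_def
    by (rule sum_le_suminf[OF bessel_series_summable]) (auto simp: bessel_coeff_def)
  then show ?thesis by (simp add: besselI_eq_series bessel_coeff_def)
qed

lemma besselI0_pos: "besselI 0 x > 0"
  using besselI0_ge1[of x] by linarith

lemma besselI1_nonneg: "x \<ge> 0 \<Longrightarrow> besselI 1 x \<ge> 0"
  by (simp add: besselI_eq_series bessel_series_nonneg)

text \<open>\<open>I\<^sub>1 \<le> I\<^sub>0\<close> on \<open>[0,\<infinity>)\<close>: with \<open>A\<^sub>k = y\<^sup>k/k!\<close> and \<open>y = x/2\<close>, the series of \<open>I\<^sub>0\<close> is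
  \<open>\<Sum> A\<^sub>k\<^sup>2\<close> and that of \<open>I\<^sub>1\<close> is \<open>\<Sum> A\<^sub>k A\<^sub>k\<^sub>+\<^sub>1\<close>, so the claim follows from \<open>2AB \<le> A\<^sup>2 + B\<^sup>2\<close>.\<close>
lemma besselI1_le_besselI0:
  assumes x: "x \<ge> 0" shows "besselI 1 x \<le> besselI 0 x"
proof -
  define y where "y = x / 2"
  define A where "A k = y ^ k / fact k" for k
  have y: "y \<ge> 0" using x by (simp add: y_def)
  have I0: "(\<lambda>k. (A k)\<^sup>2) sums besselI 0 x"
  proof -
    have "(\<lambda>k. (A k)\<^sup>2) = (\<lambda>k. bessel_coeff 0 k * (y\<^sup>2) ^ k)"
      by (simp add: fun_eq_iff A_def bessel_coeff_def power_divide power2_eq_square power_mult_distrib)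
    then show ?thesis
      by (simp add: besselI_eq_series bessel_series_def y_def summable_sums bessel_series_summable)
  qed
  have I1: "(\<lambda>k. A k * A (Suc k)) sums besselI 1 x"
  proof -
    have "(\<lambda>k. A k * A (Suc k)) = (\<lambda>k. y * (bessel_coeff 1 k * (y\<^sup>2) ^ k))"
      by (simp add: fun_eq_iff A_def bessel_coeff_def field_simps power2_eq_square del: fact_Suc)
    moreover have "besselI 1 x = y * bessel_series 1 (y\<^sup>2)"
      by (simp add: besselI_eq_series y_def)
    ultimately show ?thesis
      unfolding bessel_series_def by (simp add: sums_mult summable_sums bessel_series_summable)
  qed
  have shifted: "(\<lambda>k. (A (Suc k))\<^sup>2) sums (besselI 0 x - 1)"
    using sums_Suc_iff[of "\<lambda>k. (A k)\<^sup>2"] I0 by (simp add: A_def)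
  have "2 * (A k * A (Suc k)) \<le> (A k)\<^sup>2 + (A (Suc k))\<^sup>2" for k
    using sum_squares_bound[of "A k" "A (Suc k)"] by simp
  then have "2 * besselI 1 x \<le> besselI 0 x + (besselI 0 x - 1)"
    using sums_le[OF _ sums_mult[OF I1, of 2] sums_add[OF I0 shifted]] by blast
  then show ?thesis by simp
qed

lemma real_exp_sums: "(\<lambda>k. y ^ k / fact k) sums exp (y::real)"
  using exp_converges[of y] by (simp add: divide_inverse_commute)

lemma summable_linear_exp_series:
  assumes y: "y \<ge> 0" shows "summable (\<lambda>k. (real k + 1) * (y ^ k / fact k))"
proof (rule summable_comparison_test[OF _ summable_exp[of "2 * y"]])
  show "\<exists>N. \<forall>k\<ge>N. norm ((real k + 1) * (y ^ k / fact k)) \<le> inverse (fact k) * (2 * y) ^ k"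
  proof (intro exI allI impI)
    fix k :: nat
    have "k < 2 ^ k" by (rule less_exp)
    then have "real k + 1 \<le> 2 ^ k"
      by (metis Suc_leI of_nat_Suc of_nat_le_iff of_nat_numeral of_nat_power add.commute)
    then have "(real k + 1) * y ^ k \<le> 2 ^ k * y ^ k"
      using y by (simp add: mult_right_mono)
    then show "norm ((real k + 1) * (y ^ k / fact k)) \<le> inverse (fact k) * (2 * y) ^ k"
      using y by (simp add: power_mult_distrib divide_inverse mult_ac mult_right_mono)
  qed
qed

text \<open>\<open>\<integral>\<^sub>0\<^sup>\<infinity> x\<^sup>2\<^sup>m\<^sup>+\<^sup>1 e\<^sup>-\<^sup>x\<^sup>2\<^sup>/\<^sup>(\<^sup>2\<^sup>\<sigma>\<^sup>2\<^sup>) dx = 2\<^sup>m m! \<sigma>\<^sup>2\<^sup>m\<^sup>+\<^sup>2\<close>.\<close>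
definition half_gauss_moment :: "real \<Rightarrow> nat \<Rightarrow> real" where
  "half_gauss_moment sg m = 2 ^ m * fact m * sg ^ (2 * m + 2)"

text \<open>Odd moments of the half-line Gaussian weight, obtained from the library's
  \<open>\<integral>\<^sub>0\<^sup>\<infinity> x\<^sup>2\<^sup>m\<^sup>+\<^sup>1 e\<^sup>-\<^sup>x\<^sup>2 dx = m!/2\<close> by the scaling \<open>x \<mapsto> \<surd>2 \<sigma> x\<close>.\<close>
lemma half_gauss_moment:
  assumes sg: "sg > 0"
  shows "(\<integral>\<^sup>+x. ennreal (indicator {0<..} x * (x ^ (2 * m + 1) * exp (- x\<^sup>2 / (2 * sg\<^sup>2)))) \<partial>lborel)
       = ennreal (half_gauss_moment sg m)"
proof -
  define c where "c = sqrt 2 * sg"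
  have c: "c > 0" using sg by (simp add: c_def)
  have c2: "c\<^sup>2 = 2 * sg\<^sup>2" by (simp add: c_def power_mult_distrib)
  let ?f = "\<lambda>x::real. ennreal (indicator {0<..} x * (x ^ (2 * m + 1) * exp (- x\<^sup>2 / (2 * sg\<^sup>2))))"
  let ?g = "\<lambda>x::real. indicator {0..} x *\<^sub>R (exp (- x\<^sup>2) * x ^ (2 * m + 1))"
  have std: "(\<integral>\<^sup>+x. ennreal (?g x) \<partial>lborel) = ennreal (fact m / 2)"
    using gaussian_moment_odd_pos[of m]
    by (subst nn_integral_eq_integral)
       (auto simp: indicator_def has_bochner_integral_integral_eq intro: integrable.intros)
  have scaled: "?f (0 + c * x) = ennreal (c ^ (2 * m + 1)) * ennreal (?g x)" for x
  proof -
    have "(c * x)\<^sup>2 / (2 * sg\<^sup>2) = x\<^sup>2" using c2 sg by (simp add: power_mult_distrib)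
    then show ?thesis
      using c by (cases "x > 0"; cases "x = 0")
        (auto simp: indicator_def ennreal_mult'[symmetric] power_mult_distrib zero_less_mult_iff mult_ac)
  qed
  have "(\<integral>\<^sup>+x. ?f x \<partial>lborel) = ennreal c * (\<integral>\<^sup>+x. ?f (0 + c * x) \<partial>lborel)"
    using nn_integral_real_affine[of ?f c 0] c by simp
  also have "\<dots> = ennreal c * (ennreal (c ^ (2 * m + 1)) * ennreal (fact m / 2))"
    unfolding scaled by (subst nn_integral_cmult) (measurable, simp only: std)
  also have "\<dots> = ennreal ((c\<^sup>2) ^ (m + 1) * (fact m / 2))"
    using c by (simp add: ennreal_mult'[symmetric] power_mult power_add power2_eq_square)
  also have "(c\<^sup>2) ^ (m + 1) * (fact m / 2) = half_gauss_moment sg m"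
  proof -
    have "(sg\<^sup>2) ^ (m + 1) = sg ^ (2 * m + 2)"
      by (metis power_mult add_mult_distrib2 mult_1_right)
    then show ?thesis
      unfolding c2 half_gauss_moment_def power_mult_distrib by simp
  qed
  finally show ?thesis .
qed

text \<open>Termwise integration: a function given on \<open>(0,\<infinity>)\<close> by a series of odd powers with
  nonnegative coefficients integrates against the half-line Gaussian weight to the series of
  the corresponding moments, provided that series converges (monotone convergence).\<close>
lemma odd_series_gauss_integral:
  fixes a :: "nat \<Rightarrow> real" and g :: "real \<Rightarrow> real"
  assumes sg: "sg > 0" and a: "\<And>k. 0 \<le> a k" and g[measurable]: "g \<in> borel_measurable borel"
    and g_sums: "\<And>x. x > 0 \<Longrightarrow> (\<lambda>k. a k * x ^ (2 * (k + j) + 1)) sums g x"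
    and moments: "summable (\<lambda>k. a k * half_gauss_moment sg (k + j))"
  shows "has_bochner_integral lborel (\<lambda>x. indicator {0<..} x * (g x * exp (- x\<^sup>2 / (2 * sg\<^sup>2))))
           (\<Sum>k. a k * half_gauss_moment sg (k + j))"
proof (rule has_bochner_integral_nn_integral)
  let ?w = "\<lambda>x::real. exp (- x\<^sup>2 / (2 * sg\<^sup>2))"
  let ?t = "\<lambda>k x. ennreal (indicator {0<..} x * (a k * x ^ (2 * (k + j) + 1) * ?w x))"
  have g_nonneg: "0 \<le> g x" if "x > 0" for x
    using sums_le[OF _ sums_zero g_sums[OF that]] a that by simp
  show "(\<lambda>x. indicator {0<..} x * (g x * ?w x)) \<in> borel_measurable lborel" by measurable
  show "AE x in lborel. 0 \<le> indicator {0<..} x * (g x * ?w x)"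
    using g_nonneg by (intro AE_I2) (simp add: indicator_def)
  have moment_nonneg: "0 \<le> a k * half_gauss_moment sg (k + j)" for k
    using a sg by (simp add: half_gauss_moment_def)
  then show "0 \<le> (\<Sum>k. a k * half_gauss_moment sg (k + j))"
    by (intro suminf_nonneg moments)
  have "(\<integral>\<^sup>+x. ennreal (indicator {0<..} x * (g x * ?w x)) \<partial>lborel) = (\<integral>\<^sup>+x. (\<Sum>k. ?t k x) \<partial>lborel)"
  proof (rule nn_integral_cong)
    fix x :: real
    show "ennreal (indicator {0<..} x * (g x * ?w x)) = (\<Sum>k. ?t k x)"
    proof (cases "x > 0")
      case True
      have "(\<lambda>k. a k * x ^ (2 * (k + j) + 1) * ?w x) sums (g x * ?w x)"
        by (rule sums_mult2[OF g_sums[OF True]])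
      then show ?thesis
        using True a by (simp add: suminf_ennreal2 sums_summable sums_unique[symmetric])
    qed simp
  qed
  also have "\<dots> = (\<Sum>k. \<integral>\<^sup>+x. ?t k x \<partial>lborel)"
    by (rule nn_integral_suminf) measurable
  also have "\<dots> = (\<Sum>k. ennreal (a k * half_gauss_moment sg (k + j)))"
  proof (intro arg_cong[where f = suminf] ext)
    fix k
    have "(\<integral>\<^sup>+x. ?t k x \<partial>lborel)
        = (\<integral>\<^sup>+x. ennreal (a k) * ennreal (indicator {0<..} x * (x ^ (2 * (k + j) + 1) * ?w x)) \<partial>lborel)"
      using a by (intro nn_integral_cong) (auto simp: ennreal_mult'[symmetric] indicator_def mult_ac)
    also have "\<dots> = ennreal (a k * half_gauss_moment sg (k + j))"
      using half_gauss_moment[OF sg, of "k + j"] a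
      by (subst nn_integral_cmult) (measurable, simp add: ennreal_mult'[symmetric])
    finally show "(\<integral>\<^sup>+x. ?t k x \<partial>lborel) = ennreal (a k * half_gauss_moment sg (k + j))" .
  qed
  also have "\<dots> = ennreal (\<Sum>k. a k * half_gauss_moment sg (k + j))"
    by (rule suminf_ennreal2[OF moment_nonneg moments])
  finally show "(\<integral>\<^sup>+x. ennreal (indicator {0<..} x * (g x * ?w x)) \<partial>lborel)
      = ennreal (\<Sum>k. a k * half_gauss_moment sg (k + j))" .
qed

text \<open>The Gaussian moments of the power series of \<open>I\<^sub>\<nu>\<close>, with \<open>y = c\<^sup>2\<sigma>\<^sup>2/2\<close> displayed so
  that the resulting series are recognisably exponential series.\<close>
lemma bessel_gauss_term:
  "bessel_coeff nu k * (c / 2) ^ (2 * k + nu) * half_gauss_moment sg (k + j)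
     = (c / 2) ^ nu * 2 ^ j * sg ^ (2 * j + 2) * (fact (k + j) / fact (k + nu))
       * ((c\<^sup>2 * sg\<^sup>2 / 2) ^ k / fact k)"
proof -
  have "(c / 2) ^ (2 * k) * 2 ^ k * sg ^ (2 * k) = (c\<^sup>2 * sg\<^sup>2 / 2) ^ k"
    by (simp add: power_mult power2_eq_square field_simps)
  moreover have "sg ^ (2 * (k + j) + 2) = sg ^ (2 * k) * sg ^ (2 * j + 2)"
    by (simp add: power_add[symmetric] algebra_simps)
  ultimately show ?thesis
    unfolding bessel_coeff_def half_gauss_moment_def
    by (simp add: power_add field_simps)
qed

lemma bessel_gauss_integral:
  assumes sg: "sg > 0" and c: "c \<ge> 0" and nu: "nu \<le> 2 * j"
    and moments: "summable (\<lambda>k. bessel_coeff nu k * (c / 2) ^ (2 * k + nu) * half_gauss_moment sg (k + j))"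
  shows "has_bochner_integral lborel
     (\<lambda>x. indicator {0<..} x * (x ^ (2 * j + 1 - nu) * besselI nu (x * c) * exp (- x\<^sup>2 / (2 * sg\<^sup>2))))
     (\<Sum>k. bessel_coeff nu k * (c / 2) ^ (2 * k + nu) * half_gauss_moment sg (k + j))"
proof -
  have term_eq: "x ^ (2 * j + 1 - nu) * (x * c / 2) ^ nu * (bessel_coeff nu k * ((x * c / 2)\<^sup>2) ^ k)
      = bessel_coeff nu k * (c / 2) ^ (2 * k + nu) * x ^ (2 * (k + j) + 1)" for x k
  proof -
    have split_x: "x ^ (2 * (k + j) + 1) = x ^ (2 * j + 1 - nu) * x ^ nu * x ^ (2 * k)"
      using nu by (simp add: power_add[symmetric] algebra_simps)
    have split_c: "(c / 2) ^ (2 * k + nu) = (c / 2) ^ nu * (c / 2) ^ (2 * k)"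
      by (simp add: power_add)
    have "(x * c / 2) ^ nu = x ^ nu * (c / 2) ^ nu" "((x * c / 2)\<^sup>2) ^ k = x ^ (2 * k) * (c / 2) ^ (2 * k)"
      unfolding power_mult[symmetric] times_divide_eq_right[symmetric] power_mult_distrib by simp_all
    then show ?thesis
      unfolding split_x split_c by (simp only: ac_simps)
  qed
  have g_sums: "(\<lambda>k. bessel_coeff nu k * (c / 2) ^ (2 * k + nu) * x ^ (2 * (k + j) + 1))
          sums (x ^ (2 * j + 1 - nu) * besselI nu (x * c))" for x
  proof -
    have "(\<lambda>k. x ^ (2 * j + 1 - nu) * (x * c / 2) ^ nu * (bessel_coeff nu k * ((x * c / 2)\<^sup>2) ^ k))
        sums (x ^ (2 * j + 1 - nu) * (x * c / 2) ^ nu * bessel_series nu ((x * c / 2)\<^sup>2))"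
      unfolding bessel_series_def by (intro sums_mult summable_sums bessel_series_summable)
    then show ?thesis
      unfolding term_eq besselI_eq_series by (simp only: mult.assoc)
  qed
  have coeff_nonneg: "0 \<le> bessel_coeff nu k * (c / 2) ^ (2 * k + nu)" for k
    using c by (simp add: bessel_coeff_def)
  show ?thesis
    by (rule odd_series_gauss_integral[OF sg coeff_nonneg _ _ moments]) (measurable, rule g_sums)
qed

lemma rice_pdf_gauss_form:
  "rice_pdf z sg x = exp (- z\<^sup>2 / (2 * sg\<^sup>2)) / sg\<^sup>2 *
     (indicator {0<..} x * (x * besselI 0 (x * (z / sg\<^sup>2)) * exp (- x\<^sup>2 / (2 * sg\<^sup>2))))"
  by (simp add: rice_pdf_def indicator_def add_divide_distrib diff_divide_distrib
                exp_add[symmetric] mult_ac)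

lemma rice_pdf_measurable[measurable]: "rice_pdf z sg \<in> borel_measurable borel"
  unfolding rice_pdf_def[abs_def] by measurable

lemma rice_pdf_pos: "sg > 0 \<Longrightarrow> x > 0 \<Longrightarrow> rice_pdf z sg x > 0"
  unfolding rice_pdf_def using besselI0_pos by simp

text \<open>The exponential series produced by the moment computations cancels the factor
  \<open>e\<^sup>-\<^sup>\<zeta>\<^sup>2\<^sup>/\<^sup>(\<^sup>2\<^sup>\<sigma>\<^sup>2\<^sup>)\<close> of the density.\<close>
lemma gauss_exp_cancel:
  fixes z sg :: real assumes "sg \<noteq> 0"
  shows "exp (- z\<^sup>2 / (2 * sg\<^sup>2)) * exp ((z / sg\<^sup>2)\<^sup>2 * sg\<^sup>2 / 2) = 1"
proof -
  have "(z / sg\<^sup>2)\<^sup>2 * sg\<^sup>2 / 2 = z\<^sup>2 / (2 * sg\<^sup>2)"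
    using assms by (simp add: power2_eq_square)
  then show ?thesis by (simp add: exp_add[symmetric])
qed

text \<open>The Rice density has total mass \<open>1\<close> (case \<open>\<nu> = j = 0\<close> of the Bessel--Gaussian integral).\<close>
lemma rice_pdf_integral:
  assumes sg: "sg > 0" and z: "z \<ge> 0"
  shows "has_bochner_integral lborel (rice_pdf z sg) 1"
proof -
  define c where "c = z / sg\<^sup>2"
  define y where "y = c\<^sup>2 * sg\<^sup>2 / 2"
  have c: "c \<ge> 0" using z by (simp add: c_def)
  have "bessel_coeff 0 k * (c / 2) ^ (2 * k + 0) * half_gauss_moment sg (k + 0)
          = sg\<^sup>2 * (y ^ k / fact k)" for k
    using bessel_gauss_term[of 0 k c sg 0] by (simp add: y_def power2_eq_square)
  then have "(\<lambda>k. bessel_coeff 0 k * (c / 2) ^ (2 * k + 0) * half_gauss_moment sg (k + 0))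
              sums (sg\<^sup>2 * exp y)"
    by (simp only: sums_mult real_exp_sums)
  from bessel_gauss_integral[OF sg c _ sums_summable[OF this]] sums_unique[OF this]
  have "has_bochner_integral lborel
      (\<lambda>x. indicator {0<..} x * (x * besselI 0 (x * c) * exp (- x\<^sup>2 / (2 * sg\<^sup>2)))) (sg\<^sup>2 * exp y)"
    by simp
  then have "has_bochner_integral lborel (rice_pdf z sg)
      (exp (- z\<^sup>2 / (2 * sg\<^sup>2)) / sg\<^sup>2 * (sg\<^sup>2 * exp y))"
    unfolding rice_pdf_gauss_form[abs_def] c_def by (rule has_bochner_integral_mult_right)
  then show ?thesis
    using sg gauss_exp_cancel[of sg z] by (simp add: y_def c_def)
qed

text \<open>The factor \<open>x I\<^sub>1(x\<zeta>/\<sigma>\<^sup>2)/I\<^sub>0(x\<zeta>/\<sigma>\<^sup>2)\<close> through which the score of the Rice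
  family depends on the observation.\<close>
definition rice_ratio :: "real \<Rightarrow> real \<Rightarrow> real \<Rightarrow> real" where
  "rice_ratio z sg x = x * (besselI 1 (x * z / sg\<^sup>2) / besselI 0 (x * z / sg\<^sup>2))"

lemma rice_ratio_measurable[measurable]: "rice_ratio z sg \<in> borel_measurable borel"
  unfolding rice_ratio_def[abs_def] by measurable

text \<open>\<open>R p\<close> is the Gaussian weight times \<open>x\<^sup>2 I\<^sub>1(cx)\<close>, the case \<open>\<nu> = j = 1\<close>.\<close>
lemma rice_ratio_pdf:
  "rice_ratio z sg x * rice_pdf z sg x = exp (- z\<^sup>2 / (2 * sg\<^sup>2)) / sg\<^sup>2 *
     (indicator {0<..} x * (x\<^sup>2 * besselI 1 (x * (z / sg\<^sup>2)) * exp (- x\<^sup>2 / (2 * sg\<^sup>2))))"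
  using besselI0_pos[of "x * z / sg\<^sup>2"]
  by (simp add: rice_ratio_def rice_pdf_gauss_form power2_eq_square)

text \<open>First moment: \<open>E[x I\<^sub>1/I\<^sub>0] = \<zeta>\<close>; this is what makes the score centred.\<close>
lemma rice_ratio_integral:
  assumes sg: "sg > 0" and z: "z \<ge> 0"
  shows "has_bochner_integral lborel (\<lambda>x. rice_ratio z sg x * rice_pdf z sg x) z"
proof -
  define c where "c = z / sg\<^sup>2"
  define y where "y = c\<^sup>2 * sg\<^sup>2 / 2"
  have c: "c \<ge> 0" using z by (simp add: c_def)
  have "bessel_coeff 1 k * (c / 2) ^ (2 * k + 1) * half_gauss_moment sg (k + 1)
          = c * sg ^ 4 * (y ^ k / fact k)" for k
    using bessel_gauss_term[of 1 k c sg 1] by (simp add: y_def)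
  then have "(\<lambda>k. bessel_coeff 1 k * (c / 2) ^ (2 * k + 1) * half_gauss_moment sg (k + 1))
              sums (c * sg ^ 4 * exp y)"
    by (simp only: sums_mult real_exp_sums)
  from bessel_gauss_integral[OF sg c _ sums_summable[OF this]] sums_unique[OF this]
  have "has_bochner_integral lborel
      (\<lambda>x. indicator {0<..} x * (x\<^sup>2 * besselI 1 (x * c) * exp (- x\<^sup>2 / (2 * sg\<^sup>2))))
      (c * sg ^ 4 * exp y)"
    by (simp add: numeral_2_eq_2)
  then have "has_bochner_integral lborel (\<lambda>x. rice_ratio z sg x * rice_pdf z sg x)
      (exp (- z\<^sup>2 / (2 * sg\<^sup>2)) / sg\<^sup>2 * (c * sg ^ 4 * exp y))"
    unfolding rice_ratio_pdf c_def by (rule has_bochner_integral_mult_right)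
  moreover have "exp (- z\<^sup>2 / (2 * sg\<^sup>2)) / sg\<^sup>2 * (c * sg ^ 4 * exp y) = z"
    using sg gauss_exp_cancel[of sg z] by (simp add: y_def c_def field_simps power2_eq_square power4_eq_xxxx)
  ultimately show ?thesis by simp
qed

text \<open>The Rice distribution has a finite second moment (case \<open>\<nu> = 0\<close>, \<open>j = 1\<close>, where the
  moment series is \<open>\<Sum> (k+1) y\<^sup>k/k!\<close>).\<close>
lemma rice_pdf_second_moment:
  assumes sg: "sg > 0" and z: "z \<ge> 0"
  shows "integrable lborel (\<lambda>x. x\<^sup>2 * rice_pdf z sg x)"
proof -
  define c where "c = z / sg\<^sup>2"
  define y where "y = c\<^sup>2 * sg\<^sup>2 / 2"
  have c: "c \<ge> 0" using z by (simp add: c_def)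
  have y: "y \<ge> 0" by (simp add: y_def)
  have terms: "bessel_coeff 0 k * (c / 2) ^ (2 * k + 0) * half_gauss_moment sg (k + 1)
          = 2 * sg ^ 4 * ((real k + 1) * (y ^ k / fact k))" for k
    using bessel_gauss_term[of 0 k c sg 1] by (simp add: y_def)
  have "summable (\<lambda>k. bessel_coeff 0 k * (c / 2) ^ (2 * k + 0) * half_gauss_moment sg (k + 1))"
    unfolding terms by (rule summable_mult[OF summable_linear_exp_series[OF y]])
  from bessel_gauss_integral[OF sg c _ this]
  have "integrable lborel
      (\<lambda>x. indicator {0<..} x * (x ^ 3 * besselI 0 (x * c) * exp (- x\<^sup>2 / (2 * sg\<^sup>2))))"
    by (auto simp: numeral_3_eq_3 intro: integrable.intros)
  from integrable_mult_right[OF this, of "exp (- z\<^sup>2 / (2 * sg\<^sup>2)) / sg\<^sup>2"]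
  show ?thesis
    by (simp add: rice_pdf_gauss_form c_def power2_eq_square power3_eq_cube mult_ac)
qed

text \<open>Second moment of the ratio: \<open>R\<^sup>2 p\<close> is integrable, being dominated by \<open>x\<^sup>2 p\<close> since
  \<open>0 \<le> I\<^sub>1 \<le> I\<^sub>0\<close>.\<close>
lemma rice_ratio_sq_integrable:
  assumes sg: "sg > 0" and z: "z \<ge> 0"
  shows "integrable lborel (\<lambda>x. (rice_ratio z sg x)\<^sup>2 * rice_pdf z sg x)"
proof (rule Bochner_Integration.integrable_bound[OF rice_pdf_second_moment[OF sg z]])
  show "AE x in lborel. norm ((rice_ratio z sg x)\<^sup>2 * rice_pdf z sg x) \<le> norm (x\<^sup>2 * rice_pdf z sg x)"
  proof (intro AE_I2)
    fix x :: real
    show "norm ((rice_ratio z sg x)\<^sup>2 * rice_pdf z sg x) \<le> norm (x\<^sup>2 * rice_pdf z sg x)"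
    proof (cases "x > 0")
      case True
      define t where "t = x * z / sg\<^sup>2"
      have "t \<ge> 0" using True z sg by (simp add: t_def)
      then have "(besselI 1 t / besselI 0 t)\<^sup>2 \<le> 1"
        using besselI1_nonneg besselI1_le_besselI0 besselI0_pos[of t] by (simp add: power_le_one)
      then have "(rice_ratio z sg x)\<^sup>2 \<le> x\<^sup>2"
        unfolding rice_ratio_def t_def[symmetric] power_mult_distrib
        using mult_left_mono[of _ 1 "x\<^sup>2"] by simp
      then show ?thesis
        using rice_pdf_pos[OF sg True, of z] by (simp add: mult_right_mono)
    qed (simp add: rice_pdf_def)
  qed
qed measurable

definition rice_score :: "real \<Rightarrow> real \<Rightarrow> real \<Rightarrow> real" where
  "rice_score z sg x = (rice_ratio z sg x - z) / sg\<^sup>2"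

text \<open>For \<open>x > 0\<close>, \<open>log p\<^sub>\<zeta>\<^sub>,\<^sub>\<sigma>(x) = log(x/\<sigma>\<^sup>2) - (x\<^sup>2+\<zeta>\<^sup>2)/(2\<sigma>\<^sup>2) + log I\<^sub>0(x\<zeta>/\<sigma>\<^sup>2)\<close>, and
  \<open>I\<^sub>0' = I\<^sub>1\<close> gives the score.\<close>
lemma rice_log_pdf_deriv:
  assumes sg: "sg > 0" and x: "x > 0"
  shows "((\<lambda>w. ln (rice_pdf w sg x)) has_real_derivative rice_score z sg x) (at z)"
proof -
  let ?I0 = "\<lambda>w. besselI 0 (x * w / sg\<^sup>2)"
  have log_form: "(\<lambda>w. ln (rice_pdf w sg x))
      = (\<lambda>w. ln (x / sg\<^sup>2) - (x\<^sup>2 + w\<^sup>2) / (2 * sg\<^sup>2) + ln (?I0 w))"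
  proof
    fix w
    have "rice_pdf w sg x = x / sg\<^sup>2 * exp (- (x\<^sup>2 + w\<^sup>2) / (2 * sg\<^sup>2)) * ?I0 w"
      using x by (simp add: rice_pdf_def)
    also have "ln \<dots> = ln (x / sg\<^sup>2 * exp (- (x\<^sup>2 + w\<^sup>2) / (2 * sg\<^sup>2))) + ln (?I0 w)"
      using x sg besselI0_pos by (intro ln_mult_pos) simp_all
    also have "ln (x / sg\<^sup>2 * exp (- (x\<^sup>2 + w\<^sup>2) / (2 * sg\<^sup>2)))
        = ln (x / sg\<^sup>2) - (x\<^sup>2 + w\<^sup>2) / (2 * sg\<^sup>2)"
      using x sg by (subst ln_mult_pos) (simp_all add: field_simps)
    finally show "ln (rice_pdf w sg x) = ln (x / sg\<^sup>2) - (x\<^sup>2 + w\<^sup>2) / (2 * sg\<^sup>2) + ln (?I0 w)" .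
  qed
  have "(?I0 has_real_derivative besselI 1 (x * z / sg\<^sup>2) * (x / sg\<^sup>2)) (at z)"
    using sg by (intro DERIV_chain2[OF besselI0_deriv])
      (auto intro!: derivative_eq_intros simp: power2_eq_square power4_eq_xxxx)
  then have "((\<lambda>w. ln (?I0 w)) has_real_derivative
      1 / ?I0 z * (besselI 1 (x * z / sg\<^sup>2) * (x / sg\<^sup>2))) (at z)"
    by (rule DERIV_chain2[where g = ?I0, OF DERIV_ln_divide[OF besselI0_pos]])
  moreover have "((\<lambda>w. ln (x / sg\<^sup>2) - (x\<^sup>2 + w\<^sup>2) / (2 * sg\<^sup>2)) has_real_derivative - z / sg\<^sup>2) (at z)"
    using sg by (auto intro!: derivative_eq_intros simp: power2_eq_square power4_eq_xxxx)
  ultimately have log_deriv: "((\<lambda>w. ln (x / sg\<^sup>2) - (x\<^sup>2 + w\<^sup>2) / (2 * sg\<^sup>2) + ln (?I0 w)) has_real_derivative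
      - z / sg\<^sup>2 + 1 / ?I0 z * (besselI 1 (x * z / sg\<^sup>2) * (x / sg\<^sup>2))) (at z)"
    by (intro DERIV_add)
  have "- z / sg\<^sup>2 + 1 / ?I0 z * (besselI 1 (x * z / sg\<^sup>2) * (x / sg\<^sup>2)) = rice_score z sg x"
    by (simp add: rice_score_def rice_ratio_def diff_divide_distrib)
  with log_deriv show ?thesis
    unfolding log_form by simp
qed

lemma rice_fisher_score:
  assumes sg: "sg > 0"
  shows "rice_fisher z sg = (\<integral>x. (rice_score z sg x)\<^sup>2 * rice_pdf z sg x \<partial>lborel)"
  unfolding rice_fisher_def
proof (rule Bochner_Integration.integral_cong[OF refl])
  fix x
  show "(deriv (\<lambda>z. ln (rice_pdf z sg x)) z)\<^sup>2 * rice_pdf z sg x = (rice_score z sg x)\<^sup>2 * rice_pdf z sg x"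
    using DERIV_imp_deriv[OF rice_log_pdf_deriv[OF sg]] by (cases "x > 0") (simp_all add: rice_pdf_def)
qed

text \<open>The score is centred: \<open>E[R] - \<zeta> E[1] = 0\<close>.\<close>
lemma rice_score_mean:
  assumes sg: "sg > 0" and z: "z \<ge> 0"
  shows "has_bochner_integral lborel (\<lambda>x. rice_pdf z sg x * rice_score z sg x) 0"
proof -
  have "has_bochner_integral lborel
      (\<lambda>x. (rice_ratio z sg x * rice_pdf z sg x - z * rice_pdf z sg x) / sg\<^sup>2) ((z - z * 1) / sg\<^sup>2)"
    by (intro has_bochner_integral_divide_zero has_bochner_integral_diff
          has_bochner_integral_mult_right rice_ratio_integral rice_pdf_integral sg z)
  then show ?thesis by (simp add: rice_score_def algebra_simps diff_divide_distrib)
qed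

lemma rice_score_sq:
  assumes sg: "sg > 0" and z: "z \<ge> 0"
  shows "has_bochner_integral lborel (\<lambda>x. (rice_score z sg x)\<^sup>2 * rice_pdf z sg x)
           (((\<integral>x. (rice_ratio z sg x)\<^sup>2 * rice_pdf z sg x \<partial>lborel) - z\<^sup>2) / sg ^ 4)"
proof -
  let ?R = "rice_ratio z sg" and ?p = "rice_pdf z sg"
  have "has_bochner_integral lborel
      (\<lambda>x. ((?R x)\<^sup>2 * ?p x - 2 * z * (?R x * ?p x) + z\<^sup>2 * ?p x) / (sg\<^sup>2)\<^sup>2)
      (((\<integral>x. (?R x)\<^sup>2 * ?p x \<partial>lborel) - 2 * z * z + z\<^sup>2 * 1) / (sg\<^sup>2)\<^sup>2)"
    by (intro has_bochner_integral_divide_zero has_bochner_integral_add has_bochner_integral_diff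
          has_bochner_integral_mult_right has_bochner_integral_integrable rice_ratio_sq_integrable
          rice_ratio_integral rice_pdf_integral sg z)
  then show ?thesis
    by (simp add: rice_score_def power_divide power2_diff algebra_simps power2_eq_square
                  power4_eq_xxxx)
qed

lemma rice_fisher_ratio_moment:
  assumes sg: "sg > 0" and z: "z \<ge> 0"
  shows "rice_fisher z sg = ((\<integral>x. (rice_ratio z sg x)\<^sup>2 * rice_pdf z sg x \<partial>lborel) - z\<^sup>2) / sg ^ 4"
  unfolding rice_fisher_score[OF sg] by (rule has_bochner_integral_integral_eq[OF rice_score_sq[OF sg z]])

lemma rice_score_variance:
  assumes sg: "sg > 0" and z: "z \<ge> 0"
  shows "has_bochner_integral lborel (\<lambda>x. rice_pdf z sg x * rice_score z sg x * rice_score z sg x)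
           (rice_fisher z sg)"
  using rice_score_sq[OF sg z]
  by (simp add: rice_fisher_ratio_moment[OF sg z] power2_eq_square mult_ac)

text \<open>The substitution \<open>x = \<sigma>u\<close> turns the second moment of the ratio into the integral \<open>V\<close>.\<close>
lemma rice_ratio_sq_moment:
  assumes sg: "sg > 0"
  shows "(\<integral>x. (rice_ratio z sg x)\<^sup>2 * rice_pdf z sg x \<partial>lborel)
     = sg\<^sup>2 * exp (- z\<^sup>2 / (2 * sg\<^sup>2)) * Vfun (z / sg)"
proof -
  define E where "E = exp (- z\<^sup>2 / (2 * sg\<^sup>2))"
  define w where "w = z / sg"
  let ?f = "\<lambda>x. (rice_ratio z sg x)\<^sup>2 * rice_pdf z sg x"
  let ?h = "\<lambda>u. indicator {0<..} u *\<^sub>R (u ^ 3 * (besselI 1 (u * w))\<^sup>2 / besselI 0 (u * w) * exp (- u\<^sup>2 / 2))"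
  have scaled: "?f (sg * u) = sg * E * ?h u" for u
  proof (cases "u > 0")
    case True
    have arg: "sg * u * z / sg\<^sup>2 = u * w" using sg by (simp add: w_def power2_eq_square)
    have expo: "exp (- ((sg * u)\<^sup>2 + z\<^sup>2) / (2 * sg\<^sup>2)) = E * exp (- u\<^sup>2 / 2)"
      using sg by (simp add: E_def exp_add[symmetric] field_simps power2_eq_square)
    show ?thesis
      unfolding rice_ratio_def rice_pdf_def arg expo
      using True sg besselI0_pos[of "u * w"]
      by (simp add: power2_eq_square power3_eq_cube field_simps)
  next
    case False
    then show ?thesis using sg by (simp add: rice_pdf_def zero_less_mult_iff)
  qed
  have "integral\<^sup>L lborel ?f = sg * (\<integral>u. ?f (sg * u) \<partial>lborel)"
    using lborel_integral_real_affine[of sg ?f 0] sg by simp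
  also have "\<dots> = sg * (sg * E * Vfun w)"
    by (simp only: scaled Vfun_def set_lebesgue_integral_def integral_mult_right_zero)
  finally show ?thesis by (simp add: E_def w_def power2_eq_square)
qed

lemma rice_fisher_closed_form:
  assumes sg: "sg > 0" and z: "z \<ge> 0"
  shows "rice_fisher z sg = 1 / sg\<^sup>2 * (exp (- z\<^sup>2 / (2 * sg\<^sup>2)) * Vfun (z / sg) - z\<^sup>2 / sg\<^sup>2)"
  using sg unfolding rice_fisher_ratio_moment[OF sg z] rice_ratio_sq_moment[OF sg]
  by (simp add: field_simps power2_eq_square power4_eq_xxxx)

lemma Vfun_rescaled:
  assumes w: "w > 0"
  shows "Vfun w = 1 / w ^ 4 *
           (LBINT v:{0<..}. v ^ 3 * (besselI 1 v)\<^sup>2 / besselI 0 v * exp (- v\<^sup>2 / (2 * w\<^sup>2)))"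
proof -
  let ?g = "\<lambda>v. indicator {0<..} v *\<^sub>R (v ^ 3 * (besselI 1 v)\<^sup>2 / besselI 0 v * exp (- v\<^sup>2 / (2 * w\<^sup>2)))"
  let ?h = "\<lambda>u. indicator {0<..} u *\<^sub>R (u ^ 3 * (besselI 1 (u * w))\<^sup>2 / besselI 0 (u * w) * exp (- u\<^sup>2 / 2))"
  have scaled: "?g (w * u) = w ^ 3 * ?h u" for u
  proof (cases "u > 0")
    case True
    have "(w * u)\<^sup>2 / (2 * w\<^sup>2) = u\<^sup>2 / 2" using w by (simp add: power2_eq_square)
    then show ?thesis
      using True w by (simp add: power_mult_distrib mult.commute[of w u] mult_ac)
  qed (use w in \<open>simp add: zero_less_mult_iff\<close>)
  have "integral\<^sup>L lborel ?g = w * (\<integral>u. ?g (w * u) \<partial>lborel)"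
    using lborel_integral_real_affine[of w ?g 0] w by simp
  also have "\<dots> = w * (w ^ 3 * Vfun w)"
    by (simp only: scaled Vfun_def set_lebesgue_integral_def integral_mult_right_zero)
  finally show ?thesis unfolding set_lebesgue_integral_def using w by (simp add: power4_eq_xxxx power3_eq_cube)
qed

definition zeta_grad :: "real \<Rightarrow> real ^ 6 \<Rightarrow> real ^ 3 \<Rightarrow> 6 \<Rightarrow> real" where
  "zeta_grad S0 D b i = - (xvec b $ i) * zeta S0 D b"

lemma zeta_directional_deriv:
  "((\<lambda>t. zeta S0 (D + t *\<^sub>R axis i 1) b) has_real_derivative zeta_grad S0 D b i) (at 0)"
proof -
  have shift: "(\<lambda>t. zeta S0 (D + t *\<^sub>R axis i 1) b) = (\<lambda>t. S0 * exp (- (xvec b \<bullet> D + t * xvec b $ i)))"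
    unfolding zeta_def by (simp add: fun_eq_iff inner_add_right inner_axis)
  show ?thesis
    unfolding shift by (auto intro!: derivative_eq_intros simp: zeta_grad_def zeta_def)
qed

lemma score_eq_sum:
  assumes sg: "sg > 0" and B: "finite B" and pos: "\<And>b. b \<in> B \<Longrightarrow> s b > 0"
  shows "score S0 sg B D i s = (\<Sum>b\<in>B. rice_score (zeta S0 D b) sg (s b) * zeta_grad S0 D b i)"
proof -
  have log_sum: "(\<lambda>t. ln (joint_pdf S0 sg B (D + t *\<^sub>R axis i 1) s)) =
      (\<lambda>t. \<Sum>b\<in>B. ln (rice_pdf (zeta S0 (D + t *\<^sub>R axis i 1) b) sg (s b)))"
    unfolding joint_pdf_def
    using rice_pdf_pos[OF sg pos] by (intro ext ln_prod[OF B]) (simp add: less_imp_neq[symmetric])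
  have "((\<lambda>t. ln (rice_pdf (zeta S0 (D + t *\<^sub>R axis i 1) b) sg (s b))) has_real_derivative
      rice_score (zeta S0 D b) sg (s b) * zeta_grad S0 D b i) (at 0)" if "b \<in> B" for b
  proof -
    have "((\<lambda>w. ln (rice_pdf w sg (s b))) has_real_derivative rice_score (zeta S0 D b) sg (s b))
        (at (zeta S0 (D + 0 *\<^sub>R axis i 1) b))"
      using rice_log_pdf_deriv[OF sg pos[OF that]] by simp
    from DERIV_chain2[OF this zeta_directional_deriv] show ?thesis .
  qed
  then have "((\<lambda>t. \<Sum>b\<in>B. ln (rice_pdf (zeta S0 (D + t *\<^sub>R axis i 1) b) sg (s b))) has_real_derivative
      (\<Sum>b\<in>B. rice_score (zeta S0 D b) sg (s b) * zeta_grad S0 D b i)) (at 0)"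
    by (rule DERIV_sum)
  then show ?thesis unfolding score_def log_sum by (rule DERIV_imp_deriv)
qed

lemma joint_pdf_zero:
  assumes "b \<in> B" and "\<not> s b > 0" and "finite B"
  shows "joint_pdf S0 sg B D s = 0"
  unfolding joint_pdf_def using assms by (intro prod_zero) (auto simp: rice_pdf_def)

text \<open>The one-dimensional factor of coordinate \<open>d\<close> in the product expansion of
  \<open>\<partial>\<^sub>i\<ell> \<partial>\<^sub>j\<ell> p\<close>: the density of \<open>S\<^sub>d\<close>, times its score once for each of \<open>b\<close>, \<open>c\<close> equal to \<open>d\<close>.\<close>
definition score_factor :: "real \<Rightarrow> real \<Rightarrow> real ^ 6 \<Rightarrow> real ^ 3 \<Rightarrow> real ^ 3 \<Rightarrow> real ^ 3 \<Rightarrow> real \<Rightarrow> real" where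
  "score_factor S0 sg D b c d y = rice_pdf (zeta S0 D d) sg y
      * (if d = b then rice_score (zeta S0 D d) sg y else 1)
      * (if d = c then rice_score (zeta S0 D d) sg y else 1)"

lemma score_factor_integral:
  assumes S0: "S0 > 0" and sg: "sg > 0"
  shows "has_bochner_integral lborel (score_factor S0 sg D b c d)
     (if d = b \<and> d = c then rice_fisher (zeta S0 D d) sg else if d = b \<or> d = c then 0 else 1)"
proof -
  have z: "zeta S0 D d \<ge> 0" using S0 by (simp add: zeta_def)
  show ?thesis
    using rice_pdf_integral[OF sg z] rice_score_mean[OF sg z] rice_score_variance[OF sg z]
    by (cases "d = b"; cases "d = c") (simp_all add: score_factor_def[abs_def])
qed

lemma prod_score_factor:
  assumes "finite B" and "b \<in> B" and "c \<in> B"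
  shows "(\<Prod>d\<in>B. score_factor S0 sg D b c d (s d)) =
     joint_pdf S0 sg B D s * rice_score (zeta S0 D b) sg (s b) * rice_score (zeta S0 D c) sg (s c)"
  using assms by (simp add: score_factor_def joint_pdf_def prod.distrib)

text \<open>The integrand of the \<open>(i,j)\<close> entry of the Fisher matrix is a combination of products
  of one-dimensional factors; outside the positive orthant both sides vanish.\<close>
lemma score_product_expansion:
  assumes sg: "sg > 0" and B: "finite B"
  shows "score S0 sg B D i s * score S0 sg B D j s * joint_pdf S0 sg B D s =
    (\<Sum>b\<in>B. \<Sum>c\<in>B. (zeta_grad S0 D b i * zeta_grad S0 D c j) *
        (\<Prod>d\<in>B. score_factor S0 sg D b c d (s d)))"
proof -
  define G where "G b = rice_score (zeta S0 D b) sg (s b)" for b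
  have "(\<Sum>b\<in>B. \<Sum>c\<in>B. (zeta_grad S0 D b i * zeta_grad S0 D c j) * (\<Prod>d\<in>B. score_factor S0 sg D b c d (s d)))
      = (\<Sum>b\<in>B. \<Sum>c\<in>B. (G b * zeta_grad S0 D b i) * (G c * zeta_grad S0 D c j) * joint_pdf S0 sg B D s)"
    using B by (intro sum.cong refl) (simp add: prod_score_factor G_def mult_ac)
  also have "\<dots> = (\<Sum>b\<in>B. G b * zeta_grad S0 D b i) * (\<Sum>c\<in>B. G c * zeta_grad S0 D c j)
                  * joint_pdf S0 sg B D s"
    by (simp only: sum_product[symmetric] sum_distrib_right[symmetric])
  finally have expansion: "(\<Sum>b\<in>B. \<Sum>c\<in>B. (zeta_grad S0 D b i * zeta_grad S0 D c j) *
        (\<Prod>d\<in>B. score_factor S0 sg D b c d (s d)))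
      = (\<Sum>b\<in>B. G b * zeta_grad S0 D b i) * (\<Sum>c\<in>B. G c * zeta_grad S0 D c j) * joint_pdf S0 sg B D s" .
  show ?thesis
  proof (cases "\<forall>b\<in>B. s b > 0")
    case True
    then show ?thesis
      unfolding expansion G_def using score_eq_sum[OF sg B] by simp
  next
    case False
    then have "joint_pdf S0 sg B D s = 0" using joint_pdf_zero B by blast
    then show ?thesis unfolding expansion by simp
  qed
qed

text \<open>Fubini for the product measure: the product of the factors integrates to the
  product of their integrals, which is the Fisher information if \<open>b = c\<close> and \<open>0\<close> otherwise.\<close>
lemma prod_score_factor_integral:
  assumes S0: "S0 > 0" and sg: "sg > 0" and B: "finite B" and b: "b \<in> B"
  shows "has_bochner_integral (PiM B (\<lambda>_. lborel)) (\<lambda>s. \<Prod>d\<in>B. score_factor S0 sg D b c d (s d))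
           (if b = c then rice_fisher (zeta S0 D b) sg else 0)"
proof -
  interpret product_sigma_finite "\<lambda>_::real ^ 3. lborel :: real measure"
    by (simp add: product_sigma_finite_def lborel.sigma_finite_measure_axioms)
  have factors: "integrable lborel (score_factor S0 sg D b c d)" for d
    using score_factor_integral[OF S0 sg] by (rule integrable.intros)
  have "(\<integral>s. (\<Prod>d\<in>B. score_factor S0 sg D b c d (s d)) \<partial>PiM B (\<lambda>_. lborel))
      = (\<Prod>d\<in>B. if d = b \<and> d = c then rice_fisher (zeta S0 D d) sg else if d = b \<or> d = c then 0 else 1)"
    unfolding product_integral_prod[OF B factors]
    by (intro prod.cong refl has_bochner_integral_integral_eq score_factor_integral[OF S0 sg])
  also have "\<dots> = (if b = c then rice_fisher (zeta S0 D b) sg else 0)"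
  proof (cases "b = c")
    case True
    then show ?thesis using B b by (simp add: if_distrib cong: if_cong)
  next
    case False
    then show ?thesis using B b by auto
  qed
  finally show ?thesis
    using product_integrable_prod[OF B factors] by (simp add: has_bochner_integral_iff)
qed

lemma fisher_matrix_entry:
  assumes S0: "S0 > 0" and sg: "sg > 0" and B: "finite B"
  shows "fisher_matrix S0 sg B D $ i $ j =
     (\<Sum>b\<in>B. rice_fisher (zeta S0 D b) sg * zeta_grad S0 D b i * zeta_grad S0 D b j)"
proof -
  have "has_bochner_integral (PiM B (\<lambda>_. lborel))
      (\<lambda>s. \<Sum>b\<in>B. \<Sum>c\<in>B. (zeta_grad S0 D b i * zeta_grad S0 D c j) * (\<Prod>d\<in>B. score_factor S0 sg D b c d (s d)))
      (\<Sum>b\<in>B. \<Sum>c\<in>B. (zeta_grad S0 D b i * zeta_grad S0 D c j) * (if b = c then rice_fisher (zeta S0 D b) sg else 0))"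
    by (intro has_bochner_integral_sum has_bochner_integral_mult_right prod_score_factor_integral[OF S0 sg B])
  also have "(\<Sum>b\<in>B. \<Sum>c\<in>B. (zeta_grad S0 D b i * zeta_grad S0 D c j) * (if b = c then rice_fisher (zeta S0 D b) sg else 0))
      = (\<Sum>b\<in>B. rice_fisher (zeta S0 D b) sg * zeta_grad S0 D b i * zeta_grad S0 D b j)"
    using B by (simp add: if_distrib[of "(*) _"] mult_ac cong: if_cong)
  finally show ?thesis
    unfolding fisher_matrix_def score_product_expansion[OF sg B, symmetric]
    by (simp add: has_bochner_integral_integral_eq)
qed

theorem proposition5:
  fixes S0 sg :: real and B :: "(real ^ 3) set" and D0 :: "real ^ 6"
  assumes "S0 > 0" and "sg > 0" and "finite B" and "\<forall>b\<in>B. norm b = 1"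
  shows "fisher_matrix S0 sg B D0 =
           (\<Sum>b\<in>B. (rice_fisher (zeta S0 D0 b) sg * (zeta S0 D0 b)\<^sup>2) *\<^sub>R outer (xvec b))
       \<and> (\<forall>z\<ge>0. rice_fisher z sg =
           1 / sg\<^sup>2 * (exp (- z\<^sup>2 / (2 * sg\<^sup>2)) * Vfun (z / sg) - z\<^sup>2 / sg\<^sup>2))
       \<and> (\<forall>w>0. Vfun w = 1 / w ^ 4 *
           (LBINT v:{0<..}. v ^ 3 * (besselI 1 v)\<^sup>2 / besselI 0 v * exp (- v\<^sup>2 / (2 * w\<^sup>2))))"
proof (intro conjI allI impI)
  show "fisher_matrix S0 sg B D0 =
      (\<Sum>b\<in>B. (rice_fisher (zeta S0 D0 b) sg * (zeta S0 D0 b)\<^sup>2) *\<^sub>R outer (xvec b))"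
    unfolding vec_eq_iff
    by (simp add: fisher_matrix_entry[OF assms(1-3)] outer_def zeta_grad_def power2_eq_square mult_ac)
next
  fix z :: real assume "z \<ge> 0"
  then show "rice_fisher z sg = 1 / sg\<^sup>2 * (exp (- z\<^sup>2 / (2 * sg\<^sup>2)) * Vfun (z / sg) - z\<^sup>2 / sg\<^sup>2)"
    by (rule rice_fisher_closed_form[OF assms(2)])
next
  fix w :: real assume "w > 0"
  then show "Vfun w = 1 / w ^ 4 *
      (LBINT v:{0<..}. v ^ 3 * (besselI 1 v)\<^sup>2 / besselI 0 v * exp (- v\<^sup>2 / (2 * w\<^sup>2)))"
    by (rule Vfun_rescaled)
qed

end
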